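(* Let $N\ge 1$, $E=\{0,1,\dots,N\}$, and let $Q$ be the tridiagonal matrix on $E$ described in the context, with $a_i>0$ $(1\le i\le N)$, $b_i>0$ $(0\le i\le N-1)$, $c_i\ge 0$ $(0\le i\le N)$ and $c_N>0$; set $b_N:=c_N$. Fix $z\in\mathbb R$ and $v\in\mathbb R^{N+1}$, and define $\alpha^{(i)}_\ell$, $G^{(i)}_{\ell,k}$, $M_{N-1}$ and $N_n$ as in the context. Suppose $D:=c_N-z+M_{N-1}(c_\cdot-z)\neq 0$, where $c_\cdot-z$ denotes the vector $(c_j-z)_{j\in E}$. Then the equation $Qw+zw=-v$ has a unique solution $w=(w_n)_{n\in E}$, given by $$w_n=\frac{v_N+M_{N-1}(v)}{c_N-z+M_{N-1}(c_\cdot-z)}\bigl[1+N_{n-1}(c_\cdot-z)\bigr]-N_{n-1}(v),\qquad 0\le n\le N.$$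
   Context: The matrix $Q=(q_{ij})_{i,j\in E}$ is tridiagonal with: $q_{00}=-(b_0+c_0)$, $q_{01}=b_0$; for $1\le n\le N-1$: $q_{n,n-1}=a_n$, $q_{nn}=-(a_n+b_n+c_n)$, $q_{n,n+1}=b_n$; $q_{N,N-1}=a_N$, $q_{NN}=-(a_N+c_N)$; all other entries are $0$. Convention: $b_N:=c_N$. For fixed $i$ with $0\le i\le N-1$ and $1\le \ell\le N-i$ define $\alpha^{(i)}_1=(c_{i+1}-z+a_{i+1})/b_{i+1}$ and $\alpha^{(i)}_\ell=(c_{i+\ell}-z)/b_{i+\ell}$ for $2\le\ell\le N-i$. Define $G^{(i)}_{\ell,1}=\alpha^{(i)}_\ell$ for $\ell=1,\dots,N-i$, and recursively for $k=2,\dots,N-i$: $G^{(i)}_{\ell,k}=G^{(i)}_{\ell,k-1}+\alpha^{(i+k-1)}_{\ell-k+1}\,G^{(i)}_{k-1,k-1}$ for $\ell=k,k+1,\dots,N-i$. Set $G^{(j)}_{0,0}=1$ for all $j$. For a vector $h=(h_j)_{j\in E}$ define $M_{N-1}(h)=c_N\sum_{j=0}^{N-1}\frac{h_j}{b_j}G^{(j)}_{N-j,N-j}$, $N_n(h)=\sum_{j=0}^{n}\frac{h_j}{b_j}\sum_{k=0}^{n-j}G^{(j)}_{k,k}$ for $0\le n<N$, and $N_{-1}(h)=0$. *)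

theory Defs
  imports Complex_Main
begin

text \<open>Birth-death type tridiagonal generator Q on E = {0..N}; vectors are nat => real,
  only the entries indexed by 0..N matter.\<close>

definition Qm :: "nat \<Rightarrow> (nat \<Rightarrow> real) \<Rightarrow> (nat \<Rightarrow> real) \<Rightarrow> (nat \<Rightarrow> real) \<Rightarrow> nat \<Rightarrow> nat \<Rightarrow> real" where
  "Qm N a b c i j =
     (if i = 0 then (if j = 0 then -(b 0 + c 0) else if j = 1 then b 0 else 0)
      else if i < N then
        (if j = i - 1 then a i else if j = i then -(a i + b i + c i) else if j = i + 1 then b i else 0)
      else if i = N then
        (if j = N - 1 then a N else if j = N then -(a N + c N) else 0)
      else 0)"

definition bN :: "nat \<Rightarrow> (nat \<Rightarrow> real) \<Rightarrow> (nat \<Rightarrow> real) \<Rightarrow> nat \<Rightarrow> real" where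
  "bN N b c j = (if j = N then c N else b j)"

definition alpha :: "nat \<Rightarrow> (nat \<Rightarrow> real) \<Rightarrow> (nat \<Rightarrow> real) \<Rightarrow> (nat \<Rightarrow> real) \<Rightarrow> real \<Rightarrow> nat \<Rightarrow> nat \<Rightarrow> real" where
  "alpha N a b c z i l =
     (if l = 1 then (c (i + 1) - z + a (i + 1)) / bN N b c (i + 1)
      else (c (i + l) - z) / bN N b c (i + l))"

fun G :: "nat \<Rightarrow> (nat \<Rightarrow> real) \<Rightarrow> (nat \<Rightarrow> real) \<Rightarrow> (nat \<Rightarrow> real) \<Rightarrow> real \<Rightarrow> nat \<Rightarrow> nat \<Rightarrow> nat \<Rightarrow> real" where
  "G N a b c z i l 0 = 1"
| "G N a b c z i l (Suc 0) = alpha N a b c z i l"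
| "G N a b c z i l (Suc (Suc k)) =
     G N a b c z i l (Suc k) + alpha N a b c z (i + Suc k) (l - Suc k) * G N a b c z i (Suc k) (Suc k)"

definition MN :: "nat \<Rightarrow> (nat \<Rightarrow> real) \<Rightarrow> (nat \<Rightarrow> real) \<Rightarrow> (nat \<Rightarrow> real) \<Rightarrow> real \<Rightarrow> (nat \<Rightarrow> real) \<Rightarrow> real" where
  "MN N a b c z h = c N * (\<Sum>j<N. h j / b j * G N a b c z j (N - j) (N - j))"

definition NN :: "nat \<Rightarrow> (nat \<Rightarrow> real) \<Rightarrow> (nat \<Rightarrow> real) \<Rightarrow> (nat \<Rightarrow> real) \<Rightarrow> real \<Rightarrow> (nat \<Rightarrow> real) \<Rightarrow> nat \<Rightarrow> real" where
  "NN N a b c z h n = (\<Sum>j\<le>n. h j / b j * (\<Sum>k\<le>n - j. G N a b c z j k k))"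

definition NNprev :: "nat \<Rightarrow> (nat \<Rightarrow> real) \<Rightarrow> (nat \<Rightarrow> real) \<Rightarrow> (nat \<Rightarrow> real) \<Rightarrow> real \<Rightarrow> (nat \<Rightarrow> real) \<Rightarrow> nat \<Rightarrow> real" where
  "NNprev N a b c z h n = (if n = 0 then 0 else NN N a b c z h (n - 1))"

end

theory Submission
  imports Defs
begin

text \<open>Written with the differences of w, row n of (Q + z) w is
  b_n (w_{n+1} - w_n) - a_n (w_n - w_{n-1}) - (c_n - z) w_n.  As b_n \<noteq> 0 for n < N, the rows
  0, ..., N - 1 are a forward recursion determining w from w_0.  The numbers G are built so that
  b_{i+m} G^{(i)}_{m,m} = (c_{i+m} - z) \<Sum>_{r<m} G^{(i)}_{r,r} + a_{i+m} G^{(i)}_{m-1,m-1}; consequently the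
  increments N_n(h) - N_{n-1}(h) obey that recursion, and
  w_n = W (1 + N_{n-1}(c - z)) - N_{n-1}(v) satisfies the rows 0, ..., N - 1 for every constant W.
  Row N is affine in W with slope -(c_N - z + M_{N-1}(c - z)), which fixes W.\<close>

context
  fixes N :: nat and a b c :: "nat \<Rightarrow> real" and z :: real
begin

lemma G_eq_sum:
  "0 < k \<Longrightarrow> G N a b c z i l k = (\<Sum>r<k. alpha N a b c z (i + r) (l - r) * G N a b c z i r r)"
proof (induction k)
  case 0
  then show ?case by simp
next
  case (Suc k)
  then show ?case by (cases k) simp_all
qed

lemma bN_mult_G_diag:
  assumes "0 < m" and "bN N b c (i + m) \<noteq> 0"
  shows "bN N b c (i + m) * G N a b c z i m m =
    (c (i + m) - z) * (\<Sum>r<m. G N a b c z i r r) + a (i + m) * G N a b c z i (m - 1) (m - 1)"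
proof -
  obtain k where m: "m = Suc k" using assms(1) by (cases m) auto
  let ?\<beta> = "bN N b c (Suc (i + k))"
  have alpha_early: "alpha N a b c z (i + r) (Suc k - r) = (c (Suc (i + k)) - z) / ?\<beta>"
    if "r < k" for r
  proof -
    have "Suc k - r \<noteq> 1" "i + r + (Suc k - r) = Suc (i + k)" using that by auto
    then show ?thesis by (simp add: alpha_def)
  qed
  have alpha_last: "alpha N a b c z (i + k) (Suc 0) = (c (Suc (i + k)) - z + a (Suc (i + k))) / ?\<beta>"
    by (simp add: alpha_def)
  have G_m: "G N a b c z i m m
      = (c (i + m) - z) / ?\<beta> * (\<Sum>r<k. G N a b c z i r r)
        + (c (i + m) - z + a (i + m)) / ?\<beta> * G N a b c z i k k"
    using G_eq_sum[of m i m] m by (simp add: alpha_early alpha_last sum_distrib_left)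
  have "?\<beta> * G N a b c z i m m
      = (c (i + m) - z) * (\<Sum>r<k. G N a b c z i r r) + (c (i + m) - z + a (i + m)) * G N a b c z i k k"
    unfolding G_m using assms(2) m by (simp add: field_simps)
  then show ?thesis
    using m by (simp add: algebra_simps)
qed

text \<open>The increment N_n(h) - N_{n-1}(h), written with bN so that it also makes sense for n = N.\<close>
definition NN_incr :: "(nat \<Rightarrow> real) \<Rightarrow> nat \<Rightarrow> real" where
  "NN_incr h n = (\<Sum>j\<le>n. h j / bN N b c j * G N a b c z j (n - j) (n - j))"

lemma NN_Suc:
  "NN N a b c z h (Suc n) =
    NN N a b c z h n + (\<Sum>j\<le>Suc n. h j / b j * G N a b c z j (Suc n - j) (Suc n - j))"
proof -
  have "(\<Sum>j\<le>n. h j / b j * (\<Sum>k\<le>Suc n - j. G N a b c z j k k))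
      = (\<Sum>j\<le>n. h j / b j * (\<Sum>k\<le>n - j. G N a b c z j k k)
           + h j / b j * G N a b c z j (Suc n - j) (Suc n - j))"
    by (rule sum.cong) (auto simp: Suc_diff_le distrib_left)
  then show ?thesis
    unfolding NN_def by (simp add: sum.atMost_Suc sum.distrib)
qed

lemma NN_eq_NNprev_add_incr:
  assumes "n < N"
  shows "NN N a b c z h n = NNprev N a b c z h n + NN_incr h n"
proof (cases n)
  case 0
  then show ?thesis using assms by (simp add: NN_def NNprev_def NN_incr_def bN_def)
next
  case (Suc p)
  have "(\<Sum>j\<le>Suc p. h j / b j * G N a b c z j (Suc p - j) (Suc p - j))
      = (\<Sum>j\<le>Suc p. h j / bN N b c j * G N a b c z j (Suc p - j) (Suc p - j))"
    using assms Suc by (intro sum.cong) (auto simp: bN_def)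
  then show ?thesis
    using Suc by (simp add: NN_Suc NNprev_def NN_incr_def)
qed

definition row :: "(nat \<Rightarrow> real) \<Rightarrow> nat \<Rightarrow> real" where
  "row w n =
    (if n < N then b n * (w (n + 1) - w n) else 0)
    - (if n = 0 then 0 else a n * (w n - w (n - 1)))
    - (c n - z) * w n"

lemma Qm_row_eq_row:
  assumes "1 \<le> N" and "n \<le> N"
  shows "(\<Sum>j\<le>N. Qm N a b c n j * w j) + z * w n = row w n"
proof -
  consider "n = 0" | "0 < n" "n < N" | "n = N" "n \<noteq> 0" using assms by linarith
  then show ?thesis
  proof cases
    case 1
    have "Qm N a b c n j * w j =
        (if j = 0 then -(b 0 + c 0) * w 0 else 0) + (if j = 1 then b 0 * w 1 else 0)" for j
      using 1 by (auto simp: Qm_def)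
    then have "(\<Sum>j\<le>N. Qm N a b c n j * w j) = -(b 0 + c 0) * w 0 + b 0 * w 1"
      using assms by (simp add: sum.distrib)
    then show ?thesis using 1 assms by (simp add: row_def algebra_simps)
  next
    case 2
    have "Qm N a b c n j * w j = (if j = n - 1 then a n * w (n - 1) else 0)
        + (if j = n then -(a n + b n + c n) * w n else 0) + (if j = n + 1 then b n * w (n + 1) else 0)"
      for j
      using 2 by (auto simp: Qm_def)
    moreover have "n - 1 \<in> {..N}" "n \<in> {..N}" "n + 1 \<in> {..N}" using 2 by auto
    ultimately have "(\<Sum>j\<le>N. Qm N a b c n j * w j) =
        a n * w (n - 1) - (a n + b n + c n) * w n + b n * w (n + 1)"
      by (simp only: sum.distrib sum.delta finite_atMost if_True)
    then show ?thesis using 2 by (simp add: row_def algebra_simps)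
  next
    case 3
    have "Qm N a b c n j * w j =
        (if j = N - 1 then a N * w (N - 1) else 0) + (if j = N then -(a N + c N) * w N else 0)" for j
      using 3 by (auto simp: Qm_def)
    moreover have "N - 1 \<in> {..N}" "N \<in> {..N}" by auto
    ultimately have "(\<Sum>j\<le>N. Qm N a b c n j * w j) = a N * w (N - 1) - (a N + c N) * w N"
      by (simp only: sum.distrib sum.delta finite_atMost if_True)
    then show ?thesis using 3 by (simp add: row_def algebra_simps)
  qed
qed

lemma row_cong: "(\<And>j. j \<le> N \<Longrightarrow> w j = w' j) \<Longrightarrow> n \<le> N \<Longrightarrow> row w n = row w' n"
  unfolding row_def by auto

lemma row_diff: "row (\<lambda>j. w j - w' j) n = row w n - row w' n"
  unfolding row_def by (simp add: algebra_simps)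

lemma row_zero_imp_zero:
  assumes b_nz: "\<And>j. j < N \<Longrightarrow> b j \<noteq> 0"
    and "e 0 = 0" and rows: "\<And>n. n < N \<Longrightarrow> row e n = 0"
  shows "n \<le> N \<Longrightarrow> e n = 0"
proof (induction n rule: less_induct)
  case (less n)
  show ?case
  proof (cases n)
    case 0
    then show ?thesis using \<open>e 0 = 0\<close> by simp
  next
    case (Suc p)
    have "e p = 0" "p = 0 \<or> e (p - 1) = 0" using less Suc by auto
    with rows[of p] Suc less.prems have "b p * e n = 0" by (auto simp: row_def)
    then show ?thesis using b_nz[of p] Suc less.prems by simp
  qed
qed

definition candidate :: "(nat \<Rightarrow> real) \<Rightarrow> real \<Rightarrow> nat \<Rightarrow> real" where
  "candidate v W n = W * (1 + NNprev N a b c z (\<lambda>j. c j - z) n) - NNprev N a b c z v n"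

lemma candidate_0: "candidate v W 0 = W"
  by (simp add: candidate_def NNprev_def)

lemma candidate_Suc_diff:
  "n < N \<Longrightarrow> candidate v W (Suc n) - candidate v W n = W * NN_incr (\<lambda>j. c j - z) n - NN_incr v n"
  using NN_eq_NNprev_add_incr[of n] by (simp add: candidate_def NNprev_def algebra_simps)

context
  assumes b_nz: "\<And>j. j < N \<Longrightarrow> b j \<noteq> 0" and cN_nz: "c N \<noteq> 0"
begin

lemma bN_nz: "j \<le> N \<Longrightarrow> bN N b c j \<noteq> 0"
  using b_nz cN_nz by (auto simp: bN_def)

lemma bN_mult_NN_incr:
  assumes "n \<le> N"
  shows "bN N b c n * NN_incr h n - (if n = 0 then 0 else a n * NN_incr h (n - 1))
    = h n + (c n - z) * NNprev N a b c z h n"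
proof (cases n)
  case 0
  then show ?thesis using bN_nz[of 0] by (simp add: NN_incr_def NNprev_def)
next
  case (Suc p)
  let ?\<beta> = "bN N b c n"
  have bj: "bN N b c j = b j" if "j \<le> p" for j
    using that Suc assms by (simp add: bN_def)
  have "?\<beta> * (h j / bN N b c j * G N a b c z j (n - j) (n - j))
      = (c n - z) * (h j / b j * (\<Sum>k\<le>p - j. G N a b c z j k k))
        + a n * (h j / bN N b c j * G N a b c z j (p - j) (p - j))" if "j \<le> p" for j
  proof -
    have "j + (n - j) = n" "n - j - 1 = p - j" "{..<n - j} = {..p - j}" using that Suc by auto
    then have "?\<beta> * G N a b c z j (n - j) (n - j)
        = (c n - z) * (\<Sum>k\<le>p - j. G N a b c z j k k) + a n * G N a b c z j (p - j) (p - j)"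
      using bN_mult_G_diag[of "n - j" j] bN_nz[OF assms] that Suc by simp
    moreover have "?\<beta> * (h j / bN N b c j * G N a b c z j (n - j) (n - j))
        = h j / b j * (?\<beta> * G N a b c z j (n - j) (n - j))"
      by (simp add: bj[OF that])
    ultimately have "?\<beta> * (h j / bN N b c j * G N a b c z j (n - j) (n - j))
        = h j / b j * ((c n - z) * (\<Sum>k\<le>p - j. G N a b c z j k k)
          + a n * G N a b c z j (p - j) (p - j))"
      by simp
    also have "\<dots> = (c n - z) * (h j / b j * (\<Sum>k\<le>p - j. G N a b c z j k k))
        + a n * (h j / bN N b c j * G N a b c z j (p - j) (p - j))"
      using bj[OF that] by (simp add: algebra_simps diff_divide_distrib)
    finally show ?thesis .
  qed
  then have "?\<beta> * (\<Sum>j\<le>p. h j / bN N b c j * G N a b c z j (n - j) (n - j))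
      = (c n - z) * NN N a b c z h p + a n * NN_incr h p"
    by (simp add: sum_distrib_left sum.distrib NN_def NN_incr_def)
  moreover have "NN_incr h n = (\<Sum>j\<le>p. h j / bN N b c j * G N a b c z j (n - j) (n - j)) + h n / ?\<beta>"
    unfolding NN_incr_def Suc by (simp add: sum.atMost_Suc)
  ultimately show ?thesis
    using bN_nz[OF assms] Suc by (simp add: NNprev_def distrib_left)
qed

lemma cN_mult_NN_incr_N: "c N * NN_incr h N = MN N a b c z h + h N"
proof -
  have "NN_incr h N = (\<Sum>j<N. h j / b j * G N a b c z j (N - j) (N - j)) + h N / c N"
    unfolding NN_incr_def lessThan_Suc_atMost[symmetric] sum.lessThan_Suc by (simp add: bN_def)
  then show ?thesis
    using cN_nz by (simp add: MN_def distrib_left)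
qed

lemma row_candidate:
  assumes "n < N"
  shows "row (candidate v W) n = - v n"
proof -
  let ?g = "\<lambda>j. c j - z"
  have bn: "bN N b c n = b n" using assms by (simp add: bN_def)
  have incr: "b n * NN_incr h n - (if n = 0 then 0 else a n * NN_incr h (n - 1))
      = h n + (c n - z) * NNprev N a b c z h n" for h
    using bN_mult_NN_incr[of n h] assms bn by simp
  have "row (candidate v W) n
      = b n * (W * NN_incr ?g n - NN_incr v n)
        - (if n = 0 then 0 else a n * (W * NN_incr ?g (n - 1) - NN_incr v (n - 1)))
        - ?g n * candidate v W n"
  proof (cases n)
    case 0
    then show ?thesis using assms candidate_Suc_diff[of 0] by (simp add: row_def)
  next
    case (Suc p)
    then show ?thesis using assms candidate_Suc_diff[of n] candidate_Suc_diff[of p] by (simp add: row_def)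
  qed
  also have "\<dots> = W * (b n * NN_incr ?g n - (if n = 0 then 0 else a n * NN_incr ?g (n - 1)))
      - (b n * NN_incr v n - (if n = 0 then 0 else a n * NN_incr v (n - 1)))
      - ?g n * candidate v W n"
    by (cases "n = 0") (simp_all add: algebra_simps)
  finally show ?thesis
    unfolding incr by (simp add: candidate_def algebra_simps)
qed

lemma row_candidate_N:
  assumes "1 \<le> N"
  shows "row (candidate v W) N =
    (v N + MN N a b c z v) - W * (c N - z + MN N a b c z (\<lambda>j. c j - z)) - v N"
proof -
  let ?g = "\<lambda>j. c j - z"
  have last_incr: "a N * NN_incr h (N - 1) = MN N a b c z h - (c N - z) * NNprev N a b c z h N" for h
    using bN_mult_NN_incr[of N h] cN_mult_NN_incr_N[of h] assms by (simp add: bN_def)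
  have "row (candidate v W) N
      = - a N * (W * NN_incr ?g (N - 1) - NN_incr v (N - 1)) - ?g N * candidate v W N"
    using assms candidate_Suc_diff[of "N - 1"] by (simp add: row_def)
  also have "\<dots> = - (W * (a N * NN_incr ?g (N - 1)) - a N * NN_incr v (N - 1)) - ?g N * candidate v W N"
    by (simp add: algebra_simps)
  finally have "row (candidate v W) N
      = - (W * (a N * NN_incr ?g (N - 1)) - a N * NN_incr v (N - 1)) - ?g N * candidate v W N" .
  then show ?thesis
    unfolding last_incr by (simp add: candidate_def algebra_simps)
qed

lemma eq_candidate_if_rows_lt:
  assumes "\<And>n. n < N \<Longrightarrow> row w n = - v n" and "n \<le> N"
  shows "w n = candidate v (w 0) n"
proof -
  have "(\<lambda>j. w j - candidate v (w 0) j) n = 0"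
  proof (rule row_zero_imp_zero[OF b_nz])
    show "row (\<lambda>j. w j - candidate v (w 0) j) m = 0" if "m < N" for m
      using assms(1)[OF that] row_candidate[OF that] by (simp add: row_diff)
  qed (use assms(2) candidate_0 in auto)
  then show ?thesis by simp
qed

lemma rows_solved_iff_eq_candidate:
  fixes v w :: "nat \<Rightarrow> real"
  assumes "1 \<le> N" and D_nz: "c N - z + MN N a b c z (\<lambda>j. c j - z) \<noteq> 0"
  defines "W \<equiv> (v N + MN N a b c z v) / (c N - z + MN N a b c z (\<lambda>j. c j - z))"
  shows "(\<forall>n\<le>N. row w n = - v n) \<longleftrightarrow> (\<forall>n\<le>N. w n = candidate v W n)"
proof
  assume rows: "\<forall>n\<le>N. row w n = - v n"
  then have w_eq: "\<And>n. n \<le> N \<Longrightarrow> w n = candidate v (w 0) n"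
    using eq_candidate_if_rows_lt by simp
  have "row (candidate v (w 0)) N = - v N"
    using rows row_cong[of w _ N, OF w_eq] by simp
  then have "w 0 * (c N - z + MN N a b c z (\<lambda>j. c j - z)) = v N + MN N a b c z v"
    using row_candidate_N[OF assms(1)] by simp
  then have "w 0 = W" using D_nz by (simp add: W_def eq_divide_eq)
  with w_eq show "\<forall>n\<le>N. w n = candidate v W n" by simp
next
  assume "\<forall>n\<le>N. w n = candidate v W n"
  then have "row w n = row (candidate v W) n" if "n \<le> N" for n
    using row_cong that by blast
  moreover have "row (candidate v W) n = - v n" if "n \<le> N" for n
    using that row_candidate[of n] row_candidate_N[OF assms(1)] D_nz
    by (cases "n = N") (simp_all add: W_def)
  ultimately show "\<forall>n\<le>N. row w n = - v n" by simp
qed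

end

end

theorem mainTheorem1:
  fixes N :: nat and a b c v :: "nat \<Rightarrow> real" and z :: real
  assumes "N \<ge> 1"
    and "\<And>i. 1 \<le> i \<Longrightarrow> i \<le> N \<Longrightarrow> a i > 0"
    and "\<And>i. i \<le> N - 1 \<Longrightarrow> b i > 0"
    and "\<And>i. i \<le> N \<Longrightarrow> c i \<ge> 0"
    and "c N > 0"
    and "c N - z + MN N a b c z (\<lambda>j. c j - z) \<noteq> 0"
  shows "\<forall>w :: nat \<Rightarrow> real.
           (\<forall>n\<le>N. (\<Sum>j\<le>N. Qm N a b c n j * w j) + z * w n = - v n)
           \<longleftrightarrow>
           (\<forall>n\<le>N. w n =
              (v N + MN N a b c z v) / (c N - z + MN N a b c z (\<lambda>j. c j - z))
                * (1 + NNprev N a b c z (\<lambda>j. c j - z) n)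
              - NNprev N a b c z v n)"
proof
  fix w :: "nat \<Rightarrow> real"
  have b_nz: "b j \<noteq> 0" if "j < N" for j
    using assms(3)[of j] that by fastforce
  have cN_nz: "c N \<noteq> 0" using assms(5) by simp
  show "(\<forall>n\<le>N. (\<Sum>j\<le>N. Qm N a b c n j * w j) + z * w n = - v n) \<longleftrightarrow> (\<forall>n\<le>N. w n =
      (v N + MN N a b c z v) / (c N - z + MN N a b c z (\<lambda>j. c j - z))
        * (1 + NNprev N a b c z (\<lambda>j. c j - z) n) - NNprev N a b c z v n)"
    using Qm_row_eq_row[OF assms(1)]
      rows_solved_iff_eq_candidate[where v = v and w = w, OF b_nz cN_nz assms(1,6)]
    by (simp add: candidate_def)
qed

end
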